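(* Let $G=(V,E)$ be a finite connected graph, $q\ge1$ and $0\le p\le p'\le1$. Then $\mathbb P^{G,p}\preceq\mathbb P^{G,p'}$, i.e. $\mathbb P^{G,p}(A)\le\mathbb P^{G,p'}(A)$ for every increasing event $A\subset\{1,q\}^E$.
   Context: Graph Laplacian for $c:E\to(0,\infty)$: $\Delta_cf(x)=\sum_{e=\{x,y\}\in E}c_e(f(x)-f(y))$ on $H_0=\{f:V\to\mathbb R:\sum_xf(x)=0\}$, determinant $\det\Delta_c>0$. For $\kappa\in\{1,q\}^E$: $h(\kappa)=\#\{e:\kappa_e=q\}$, $s(\kappa)=\#\{e:\kappa_e=1\}$. $\mathbb P^{G,p}(\kappa)=Z^{-1}p^{h(\kappa)}(1-p)^{s(\kappa)}(\det\Delta_\kappa)^{-1/2}$ (with convention $0^0=1$). An event is increasing if its indicator is increasing for the coordinatewise order ($1<q$). *)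

theory Defs
  imports "HOL-Analysis.Analysis"
begin

definition graph :: "'v set set \<Rightarrow> bool" where
  "graph E \<longleftrightarrow> (\<forall>e\<in>E. card e = 2)"

definition adj :: "'v set set \<Rightarrow> 'v \<Rightarrow> 'v \<Rightarrow> bool" where
  "adj E x y \<longleftrightarrow> {x, y} \<in> E"

definition connected_graph :: "'v set set \<Rightarrow> bool" where
  "connected_graph E \<longleftrightarrow> graph E \<and> (\<forall>x y. (adj E)\<^sup>*\<^sup>* x y)"

text \<open>Matrix of the weighted graph Laplacian
  (Delta_c f)(x) = sum over edges e = {x,y} of c_e (f x - f y).\<close>
definition laplacian :: "'v::finite set set \<Rightarrow> ('v set \<Rightarrow> real) \<Rightarrow> real^'v^'v" where
  "laplacian E c = (\<chi> x y. if x = y then (\<Sum>e\<in>{e\<in>E. x \<in> e}. c e)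
                          else - (if {x, y} \<in> E then c {x, y} else 0))"

text \<open>Determinant of Delta_c restricted to H0 = {f. sum f = 0}.  Delta_c is symmetric,
  kills constants and maps H0 into H0; extending its restriction to H0 by the identity on
  the constants gives the operator Delta_c + (1/|V|) J (J the all-ones matrix), whose
  determinant is det(Delta_c restricted to H0).\<close>
definition detH0 :: "'v::finite set set \<Rightarrow> ('v set \<Rightarrow> real) \<Rightarrow> real" where
  "detH0 E c = det (laplacian E c + (\<chi> x y. 1 / real CARD('v)))"

text \<open>Configurations: omega e = True means kappa_e = q, False means kappa_e = 1.
  Edges outside E are fixed to False.  Pointwise order on bool functions is the
  coordinatewise order with 1 < q.\<close>
definition configs :: "'v set set \<Rightarrow> ('v set \<Rightarrow> bool) set" where
  "configs E = {\<omega>. \<forall>e. e \<notin> E \<longrightarrow> \<not> \<omega> e}"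

definition kappa :: "real \<Rightarrow> ('v set \<Rightarrow> bool) \<Rightarrow> 'v set \<Rightarrow> real" where
  "kappa q \<omega> e = (if \<omega> e then q else 1)"

definition weight :: "'v::finite set set \<Rightarrow> real \<Rightarrow> real \<Rightarrow> ('v set \<Rightarrow> bool) \<Rightarrow> real" where
  "weight E q p \<omega> = p ^ card {e\<in>E. \<omega> e} * (1 - p) ^ card {e\<in>E. \<not> \<omega> e}
      / sqrt (detH0 E (kappa q \<omega>))"

definition prob_event :: "'v::finite set set \<Rightarrow> real \<Rightarrow> real \<Rightarrow> ('v set \<Rightarrow> bool) set \<Rightarrow> real" where
  "prob_event E q p A = (\<Sum>\<omega>\<in>A \<inter> configs E. weight E q p \<omega>) / (\<Sum>\<omega>\<in>configs E. weight E q p \<omega>)"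

definition increasing_event :: "'v set set \<Rightarrow> ('v set \<Rightarrow> bool) set \<Rightarrow> bool" where
  "increasing_event E A \<longleftrightarrow> A \<subseteq> configs E \<and>
     (\<forall>\<omega>\<in>A. \<forall>\<omega>'\<in>configs E. \<omega> \<le> \<omega>' \<longrightarrow> \<omega>' \<in> A)"

end

(*
  Holley's inequality, itself a consequence of the Ahlswede-Daykin four functions theorem, reduces
  the claim to the lattice condition w_p(S) w_p'(T) <= w_p'(S Un T) w_p(S Int T) for the weights of
  edge sets.  The Bernoulli factor satisfies it edge by edge.  For the factor (det Delta_kappa)^(-1/2)
  it says that U |-> det Delta_kappa(U) is log-submodular, which is Rayleigh monotonicity of
  effective resistances.
*)
theory Submission
  imports Defs
begin

lemma ahlswede_daykin_two_point:
  fixes a0 a1 b0 b1 c0 c1 d0 d1 :: real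
  assumes nn: "0 \<le> a0" "0 \<le> a1" "0 \<le> b0" "0 \<le> b1" "0 \<le> c0" "0 \<le> c1" "0 \<le> d0" "0 \<le> d1"
    and h00: "a0 * b0 \<le> c0 * d0" and h01: "a0 * b1 \<le> c1 * d0" and h10: "a1 * b0 \<le> c1 * d0"
    and h11: "a1 * b1 \<le> c1 * d1"
  shows "(a0 + a1) * (b0 + b1) \<le> (c0 + c1) * (d0 + d1)"
proof (cases "c1 * d0 = 0")
  case True
  then have cross: "a0 * b1 + a1 * b0 = 0"
    using h01 h10 mult_nonneg_nonneg[OF nn(1) nn(4)] mult_nonneg_nonneg[OF nn(2) nn(3)] by linarith
  have "(a0 + a1) * (b0 + b1) = a0 * b0 + a1 * b1 + (a0 * b1 + a1 * b0)" by (simp add: algebra_simps)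
  also have "\<dots> = a0 * b0 + a1 * b1" using cross by simp
  also have "\<dots> \<le> c0 * d0 + c1 * d1" using h00 h11 by simp
  also have "\<dots> \<le> (c0 + c1) * (d0 + d1)" using nn by (simp add: algebra_simps)
  finally show ?thesis .
next
  case False
  define z where "z = c1 * d0"
  have z: "z > 0" using False nn unfolding z_def by (simp add: less_le)
  \<comment> \<open>The identity (a0 b0 + z)(z + a1 b1) - z (a0 + a1)(b0 + b1) = (z - a0 b1)(z - a1 b0) does the work.\<close>
  have "z * ((a0 + a1) * (b0 + b1)) \<le> (a0 * b0 + z) * (z + a1 * b1)"
  proof -
    have "0 \<le> (z - a0 * b1) * (z - a1 * b0)" using h01 h10 unfolding z_def by simp
    also have "\<dots> = (a0 * b0 + z) * (z + a1 * b1) - z * ((a0 + a1) * (b0 + b1))"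
      by (simp add: algebra_simps)
    finally show ?thesis by simp
  qed
  also have "\<dots> \<le> (c0 * d0 + z) * (z + c1 * d1)"
    by (rule mult_mono[OF add_mono[OF h00 order_refl] add_mono[OF order_refl h11]])
      (use z nn in auto)
  also have "\<dots> = z * ((c0 + c1) * (d0 + d1))" unfolding z_def by (simp add: algebra_simps)
  finally show ?thesis using z by simp
qed

lemma sum_Pow_insert:
  assumes "finite N" "x \<notin> N"
  shows "(\<Sum>S\<in>Pow (insert x N). f S) = (\<Sum>S\<in>Pow N. f S + f (insert x S))"
proof -
  have "Pow N \<inter> insert x ` Pow N = {}" "inj_on (insert x) (Pow N)"
    using assms by (auto simp: inj_on_def)
  then show ?thesis
    using assms by (simp add: Pow_insert sum.union_disjoint sum.reindex sum.distrib)
qed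

theorem ahlswede_daykin:
  fixes \<alpha> \<beta> \<gamma> \<delta> :: "'a set \<Rightarrow> real"
  assumes "finite N"
    and "\<And>S. S \<subseteq> N \<Longrightarrow> 0 \<le> \<alpha> S" "\<And>S. S \<subseteq> N \<Longrightarrow> 0 \<le> \<beta> S"
    and "\<And>S. S \<subseteq> N \<Longrightarrow> 0 \<le> \<gamma> S" "\<And>S. S \<subseteq> N \<Longrightarrow> 0 \<le> \<delta> S"
    and "\<And>S T. S \<subseteq> N \<Longrightarrow> T \<subseteq> N \<Longrightarrow> \<alpha> S * \<beta> T \<le> \<gamma> (S \<union> T) * \<delta> (S \<inter> T)"
  shows "(\<Sum>S\<in>Pow N. \<alpha> S) * (\<Sum>S\<in>Pow N. \<beta> S) \<le> (\<Sum>S\<in>Pow N. \<gamma> S) * (\<Sum>S\<in>Pow N. \<delta> S)"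
  using assms
proof (induction N arbitrary: \<alpha> \<beta> \<gamma> \<delta> rule: finite_induct)
  case empty
  then show ?case by simp
next
  case (insert x N)
  let ?fold = "\<lambda>f S. f S + f (insert x S)"
  have "(\<Sum>S\<in>Pow N. ?fold \<alpha> S) * (\<Sum>S\<in>Pow N. ?fold \<beta> S)
      \<le> (\<Sum>S\<in>Pow N. ?fold \<gamma> S) * (\<Sum>S\<in>Pow N. ?fold \<delta> S)"
  proof (rule insert.IH)
    fix S assume "S \<subseteq> N"
    then have "S \<subseteq> insert x N" "insert x S \<subseteq> insert x N" by auto
    then show "0 \<le> ?fold \<alpha> S" "0 \<le> ?fold \<beta> S" "0 \<le> ?fold \<gamma> S" "0 \<le> ?fold \<delta> S"
      using insert.prems(1-4) by (auto intro: add_nonneg_nonneg)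
  next
    fix S T assume S: "S \<subseteq> N" and T: "T \<subseteq> N"
    with insert.hyps have "x \<notin> S" "x \<notin> T" by auto
    then have set_eqs: "S \<inter> insert x T = S \<inter> T" "insert x S \<inter> T = S \<inter> T"
      "insert x S \<inter> insert x T = insert x (S \<inter> T)"
      "S \<union> insert x T = insert x (S \<union> T)" "insert x S \<union> T = insert x (S \<union> T)"
      "insert x S \<union> insert x T = insert x (S \<union> T)" by auto
    have subsets: "S \<subseteq> insert x N" "insert x S \<subseteq> insert x N" "T \<subseteq> insert x N"
      "insert x T \<subseteq> insert x N" "S \<inter> T \<subseteq> insert x N" "insert x (S \<inter> T) \<subseteq> insert x N"
      "S \<union> T \<subseteq> insert x N" "insert x (S \<union> T) \<subseteq> insert x N"
      using S T by auto
    show "?fold \<alpha> S * ?fold \<beta> T \<le> ?fold \<gamma> (S \<union> T) * ?fold \<delta> (S \<inter> T)"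
      using insert.prems(1-4) subsets insert.prems(5)[of S T] insert.prems(5)[of S "insert x T"]
        insert.prems(5)[of "insert x S" T] insert.prems(5)[of "insert x S" "insert x T"]
      by (intro ahlswede_daykin_two_point) (auto simp: set_eqs)
  qed
  with insert.hyps show ?case by (simp add: sum_Pow_insert)
qed

corollary holley_inequality:
  fixes \<mu> \<nu> :: "'a set \<Rightarrow> real" and \<A> :: "'a set set"
  assumes "finite N"
    and \<mu>_nonneg: "\<And>S. S \<subseteq> N \<Longrightarrow> 0 \<le> \<mu> S" and \<nu>_nonneg: "\<And>S. S \<subseteq> N \<Longrightarrow> 0 \<le> \<nu> S"
    and holley: "\<And>S T. S \<subseteq> N \<Longrightarrow> T \<subseteq> N \<Longrightarrow> \<mu> S * \<nu> T \<le> \<nu> (S \<union> T) * \<mu> (S \<inter> T)"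
    and up_closed: "\<And>S T. S \<in> \<A> \<Longrightarrow> S \<subseteq> T \<Longrightarrow> T \<subseteq> N \<Longrightarrow> T \<in> \<A>"
  shows "(\<Sum>S\<in>Pow N \<inter> \<A>. \<mu> S) * (\<Sum>S\<in>Pow N. \<nu> S) \<le> (\<Sum>S\<in>Pow N \<inter> \<A>. \<nu> S) * (\<Sum>S\<in>Pow N. \<mu> S)"
proof -
  have "(\<Sum>S\<in>Pow N. if S \<in> \<A> then \<mu> S else 0) * (\<Sum>S\<in>Pow N. \<nu> S)
      \<le> (\<Sum>S\<in>Pow N. if S \<in> \<A> then \<nu> S else 0) * (\<Sum>S\<in>Pow N. \<mu> S)"
  proof (rule ahlswede_daykin[OF \<open>finite N\<close>])
    fix S T assume S: "S \<subseteq> N" and T: "T \<subseteq> N"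
    then have "S \<in> \<A> \<Longrightarrow> S \<union> T \<in> \<A>" "0 \<le> \<nu> (S \<union> T) * \<mu> (S \<inter> T)"
      using up_closed \<mu>_nonneg[of "S \<inter> T"] \<nu>_nonneg[of "S \<union> T"] by (auto intro: mult_nonneg_nonneg)
    then show "(if S \<in> \<A> then \<mu> S else 0) * \<nu> T \<le> (if S \<union> T \<in> \<A> then \<nu> (S \<union> T) else 0) * \<mu> (S \<inter> T)"
      using S T holley by auto
  qed (use \<mu>_nonneg \<nu>_nonneg in auto)
  then show ?thesis using \<open>finite N\<close> by (simp add: sum.inter_restrict)
qed

definition pos_def :: "real^'n::finite^'n \<Rightarrow> bool" where
  "pos_def M \<longleftrightarrow> (\<forall>x. x \<noteq> 0 \<longrightarrow> 0 < x \<bullet> (M *v x))"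

lemma pos_def_invertible:
  assumes "pos_def M" shows "invertible M"
proof -
  have "\<forall>x. M *v x = 0 \<longrightarrow> x = 0"
    using assms unfolding pos_def_def by (metis inner_zero_right less_irrefl)
  then show ?thesis
    using matrix_left_invertible_ker invertible_left_inverse by blast
qed

lemma pos_def_solvable:
  assumes "pos_def M" obtains z where "M *v z = b"
proof -
  obtain B where "M ** B = mat 1"
    using pos_def_invertible[OF assms] unfolding invertible_def by blast
  then have "M *v (B *v b) = b" by (metis matrix_vector_mul_assoc matrix_vector_mul_lid)
  then show ?thesis by (rule that)
qed

lemma continuous_on_det:
  fixes A :: "real \<Rightarrow> real^'n::finite^'n"
  assumes "\<And>i j. continuous_on S (\<lambda>t. A t $ i $ j)"
  shows "continuous_on S (\<lambda>t. det (A t))"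
  unfolding det_def by (intro continuous_on_sum continuous_on_mult_left continuous_on_prod assms)

lemma pos_def_det_pos:
  fixes M :: "real^'n::finite^'n"
  assumes "pos_def M" shows "det M > 0"
proof (rule ccontr)
  assume "\<not> det M > 0"
  \<comment> \<open>The segment from the identity to M stays positive definite, so det never vanishes on it.\<close>
  define H where "H t = (1 - t) *\<^sub>R mat 1 + t *\<^sub>R M" for t :: real
  have "continuous_on {0..1} (\<lambda>t. det (H t))" unfolding H_def
    by (rule continuous_on_det) (auto intro!: continuous_intros simp: mat_def)
  moreover have "det (H 1) \<le> 0" "0 \<le> det (H 0)" using \<open>\<not> det M > 0\<close> by (auto simp: H_def)
  ultimately obtain t where t: "0 \<le> t" "t \<le> 1" "det (H t) = 0"
    using IVT2'[of "\<lambda>t. det (H t)" 1 0 0] by auto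
  have "pos_def (H t)" unfolding pos_def_def
  proof (intro allI impI)
    fix x :: "real^'n" assume "x \<noteq> 0"
    then have "0 < x \<bullet> x" "0 < x \<bullet> (M *v x)" using assms unfolding pos_def_def by auto
    moreover have "x \<bullet> (H t *v x) = (1 - t) * (x \<bullet> x) + t * (x \<bullet> (M *v x))"
      by (simp add: H_def algebra_simps inner_add_right scaleR_matrix_vector_assoc[symmetric])
    ultimately show "0 < x \<bullet> (H t *v x)"
      using t by (cases "t = 1") (auto intro: add_pos_nonneg)
  qed
  then show False using pos_def_invertible invertible_det_nz t(3) by blast
qed

lemma cramer_row_symmetric:
  fixes M :: "real^'n::finite^'n"
  assumes "transpose M = M" "M *v z = b"
  shows "det (\<chi> i. if i = k then b else row i M) = z $ k * det M"
proof -
  have "(\<chi> i. if i = k then b else row i M) = transpose (\<chi> i j. if j = k then (M *v z) $ i else M $ i $ j)"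
    using assms(2) assms(1)[unfolded transpose_def, symmetric]
    by (auto simp: vec_eq_iff transpose_def row_def)
  then show ?thesis using cramer_lemma[where A=M and k=k and x=z] by simp
qed

lemma inner_solution_antimono:
  fixes M M' :: "real^'n::finite^'n"
  assumes "transpose M = M" "pos_def M" "\<And>x. x \<bullet> (M *v x) \<le> x \<bullet> (M' *v x)"
    and "M *v z = b" "M' *v z' = b"
  shows "b \<bullet> z' \<le> b \<bullet> z"
proof -
  have "0 \<le> (z - z') \<bullet> (M *v (z - z'))"
    using assms(2) unfolding pos_def_def by (cases "z = z'") (auto simp: less_imp_le)
  also have "\<dots> = b \<bullet> z - 2 * (b \<bullet> z') + z' \<bullet> (M *v z')"
    using assms(4) dot_lmul_matrix[of z' M z] transpose_matrix_vector[of M z'] assms(1)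
    by (simp add: matrix_vector_mult_diff_distrib inner_diff_left inner_diff_right inner_commute)
  also have "\<dots> \<le> b \<bullet> z - 2 * (b \<bullet> z') + z' \<bullet> (M' *v z')" using assms(3) by simp
  also have "\<dots> = b \<bullet> z - b \<bullet> z'" using assms(5) by (simp add: inner_commute)
  finally show ?thesis by simp
qed

definition edge_vector :: "'n \<Rightarrow> 'n \<Rightarrow> real^'n::finite" where
  "edge_vector a b = axis a 1 - axis b 1"

definition outer_product :: "real^'n::finite \<Rightarrow> real^'n^'n" where
  "outer_product u = (\<chi> i j. u $ i * u $ j)"

lemma inner_edge_vector: "a \<noteq> b \<Longrightarrow> edge_vector a b \<bullet> x = x $ a - x $ b"
  by (simp add: edge_vector_def inner_diff_left inner_commute[of "axis _ _"] inner_axis)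

lemma outer_product_mult: "outer_product u *v x = (u \<bullet> x) *\<^sub>R u"
  by (simp add: vec_eq_iff outer_product_def matrix_vector_mult_def inner_vec_def sum_distrib_left algebra_simps)

lemma quadratic_outer_product: "x \<bullet> (outer_product u *v x) = (u \<bullet> x)\<^sup>2"
  by (simp add: outer_product_mult inner_commute[of x] power2_eq_square)

lemma det_row_affine:
  fixes C :: "'n::finite \<Rightarrow> real^'n"
  shows "det (\<chi> i. if i = k then u + t *s v else C i) =
     det (\<chi> i. if i = k then u else C i) + t * det (\<chi> i. if i = k then v else C i)"
  using det_row_add[of k "\<lambda>_. u" "\<lambda>_. t *s v" C] det_row_mul[of k t "\<lambda>_. v" C] by simp

text \<open>The matrix determinant lemma det (M + t u u^T) = det M (1 + t u \<bullet> M\<inverse> u) for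
  u = e_a - e_b: only rows a and b change, and each is expanded by multilinearity.\<close>
lemma det_add_outer_edge_vector:
  fixes M :: "real^'n::finite^'n"
  assumes sym: "transpose M = M" and ab: "a \<noteq> b" and z: "M *v z = edge_vector a b"
  shows "det (M + t *\<^sub>R outer_product (edge_vector a b)) = det M * (1 + t * (edge_vector a b \<bullet> z))"
proof -
  define u where "u = edge_vector a b"
  have u: "u $ a = 1" "u $ b = -1" "\<And>i. i \<noteq> a \<Longrightarrow> i \<noteq> b \<Longrightarrow> u $ i = 0"
    using ab by (auto simp: u_def edge_vector_def axis_def)
  have "M + t *\<^sub>R outer_product u = (\<chi> i. if i = a then row a M + t *s u
      else if i = b then row b M + (-t) *s u else row i M)"
    using ab u by (auto simp: vec_eq_iff outer_product_def row_def)
  moreover have "(\<chi> i. if i = a then row a M else if i = b then row b M + (-t) *s u else row i M)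
      = (\<chi> i. if i = b then row b M + (-t) *s u else row i M)"
    "(\<chi> i. if i = a then u else if i = b then row b M + (-t) *s u else row i M)
      = (\<chi> i. if i = b then row b M + (-t) *s u else if i = a then u else row i M)"
    "(\<chi> i. if i = b then row b M else if i = a then u else row i M) = (\<chi> i. if i = a then u else row i M)"
    "(\<chi> i. if i = b then row b M else row i M) = M"
    using ab by (auto simp: vec_eq_iff row_def)
  moreover have "det (\<chi> i. if i = b then u else if i = a then u else row i M) = 0"
    by (rule det_identical_rows[OF ab]) (auto simp: row_def vec_eq_iff)
  ultimately have "det (M + t *\<^sub>R outer_product u)
      = det M + t * (det (\<chi> i. if i = a then u else row i M) - det (\<chi> i. if i = b then u else row i M))"
    by (simp add: det_row_affine algebra_simps)
  also have "\<dots> = det M * (1 + t * (u \<bullet> z))"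
    using ab z by (simp add: cramer_row_symmetric[OF sym] inner_edge_vector u_def algebra_simps)
  finally show ?thesis unfolding u_def .
qed

definition edge_matrix :: "'v::finite set \<Rightarrow> real^'v^'v" where
  "edge_matrix e = (\<chi> i j. if i \<in> e \<and> j \<in> e then (if i = j then 1 else -1) else 0)"

definition mean_matrix :: "real^'v::finite^'v" where
  "mean_matrix = (\<chi> x y. 1 / real CARD('v))"

definition shifted_laplacian :: "'v::finite set set \<Rightarrow> ('v set \<Rightarrow> real) \<Rightarrow> real^'v^'v" where
  "shifted_laplacian E c = laplacian E c + mean_matrix"

lemma detH0_eq_det_shifted_laplacian: "detH0 E c = det (shifted_laplacian E c)"
  by (simp add: detH0_def shifted_laplacian_def mean_matrix_def)

lemma graph_edgeE:
  assumes "graph E" "e \<in> E" obtains a b where "e = {a, b}" "a \<noteq> b"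
  using assms by (auto simp: graph_def card_2_iff)

lemma edge_matrix_eq_outer_product: "a \<noteq> b \<Longrightarrow> edge_matrix {a, b} = outer_product (edge_vector a b)"
  by (auto simp: vec_eq_iff edge_matrix_def outer_product_def edge_vector_def axis_def)

lemma quadratic_edge_matrix: "a \<noteq> b \<Longrightarrow> x \<bullet> (edge_matrix {a, b} *v x) = (x $ a - x $ b)\<^sup>2"
  by (simp add: edge_matrix_eq_outer_product quadratic_outer_product inner_edge_vector)

lemma quadratic_edge_matrix_nonneg: "graph E \<Longrightarrow> e \<in> E \<Longrightarrow> 0 \<le> x \<bullet> (edge_matrix e *v x)"
  by (metis graph_edgeE quadratic_edge_matrix zero_le_power2)

lemma quadratic_mean_matrix:
  fixes x :: "real^'v::finite"
  shows "x \<bullet> (mean_matrix *v x) = (\<Sum>i\<in>UNIV. x $ i)\<^sup>2 / real CARD('v)"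
proof -
  have "mean_matrix *v x = ((\<Sum>i\<in>UNIV. x $ i) / real CARD('v)) *\<^sub>R (\<chi> i. 1)"
    by (simp add: vec_eq_iff mean_matrix_def matrix_vector_mult_def sum_divide_distrib)
  then show ?thesis
    by (simp add: inner_vec_def power2_eq_square sum_distrib_left sum_distrib_right sum_divide_distrib algebra_simps)
qed

lemma laplacian_eq_sum_edge_matrix:
  fixes E :: "'v::finite set set"
  assumes "graph E"
  shows "laplacian E c = (\<Sum>e\<in>E. c e *\<^sub>R edge_matrix e)"
proof -
  have "laplacian E c $ i $ j = (\<Sum>e\<in>E. c e * edge_matrix e $ i $ j)" for i j
  proof (cases "i = j")
    case True
    then have "(\<Sum>e\<in>E. c e * edge_matrix e $ i $ j) = (\<Sum>e\<in>E. if i \<in> e then c e else 0)"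
      by (intro sum.cong) (auto simp: edge_matrix_def)
    then show ?thesis using True by (simp add: laplacian_def sum.inter_filter)
  next
    case False
    have "(\<Sum>e\<in>E. c e * edge_matrix e $ i $ j) = (\<Sum>e\<in>E. if e = {i, j} then - c e else 0)"
    proof (intro sum.cong refl)
      fix e assume "e \<in> E"
      with assms obtain a b where "e = {a, b}" "a \<noteq> b" by (rule graph_edgeE)
      with False show "c e * edge_matrix e $ i $ j = (if e = {i, j} then - c e else 0)"
        by (auto simp: edge_matrix_def doubleton_eq_iff)
    qed
    then show ?thesis using False by (simp add: laplacian_def sum.delta')
  qed
  then show ?thesis by (simp add: vec_eq_iff)
qed

lemma symmetric_shifted_laplacian: "transpose (shifted_laplacian E c) = shifted_laplacian E c"
  by (auto simp: vec_eq_iff transpose_def shifted_laplacian_def laplacian_def mean_matrix_def insert_commute)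

lemma quadratic_shifted_laplacian:
  fixes E :: "'v::finite set set"
  assumes "graph E"
  shows "x \<bullet> (shifted_laplacian E c *v x)
    = (\<Sum>e\<in>E. c e * (x \<bullet> (edge_matrix e *v x))) + (\<Sum>i\<in>UNIV. x $ i)\<^sup>2 / real CARD('v)"
proof -
  have "(\<Sum>e\<in>E. c e *\<^sub>R edge_matrix e) *v x = (\<Sum>e\<in>E. c e *\<^sub>R (edge_matrix e *v x))"
    by (simp add: vec_eq_iff matrix_vector_mult_def sum_distrib_left sum_distrib_right sum.swap[of _ E] algebra_simps)
  then show ?thesis
    by (simp add: shifted_laplacian_def laplacian_eq_sum_edge_matrix[OF assms]
        matrix_vector_mult_add_rdistrib inner_add_right inner_sum_right quadratic_mean_matrix)
qed

lemma quadratic_shifted_laplacian_mono: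
  assumes "graph E" "\<And>e. e \<in> E \<Longrightarrow> c e \<le> c' e"
  shows "x \<bullet> (shifted_laplacian E c *v x) \<le> x \<bullet> (shifted_laplacian E c' *v x)"
  unfolding quadratic_shifted_laplacian[OF assms(1)]
  using assms by (intro add_right_mono sum_mono mult_right_mono quadratic_edge_matrix_nonneg)

text \<open>If the form vanishes at x, every edge term c_e (x_a - x_b)^2 vanishes, so x is constant on the
  connected graph, and the mean term forces that constant to be 0.\<close>
lemma pos_def_shifted_laplacian:
  fixes E :: "'v::finite set set"
  assumes conn: "connected_graph E" and c_pos: "\<And>e. e \<in> E \<Longrightarrow> 0 < c e"
  shows "pos_def (shifted_laplacian E c)"
  unfolding pos_def_def
proof (intro allI impI)
  fix x :: "real^'v" assume "x \<noteq> 0"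
  have g: "graph E" using conn by (simp add: connected_graph_def)
  have terms_nonneg: "\<forall>e\<in>E. 0 \<le> c e * (x \<bullet> (edge_matrix e *v x))"
    using c_pos quadratic_edge_matrix_nonneg[OF g] by (simp add: less_imp_le)
  show "0 < x \<bullet> (shifted_laplacian E c *v x)"
  proof (rule ccontr)
    assume nonpos: "\<not> 0 < x \<bullet> (shifted_laplacian E c *v x)"
    let ?edges = "\<Sum>e\<in>E. c e * (x \<bullet> (edge_matrix e *v x))"
    let ?mean = "(\<Sum>i\<in>UNIV. x $ i)\<^sup>2 / real CARD('v)"
    have "0 \<le> ?edges" "0 \<le> ?mean" using terms_nonneg by (auto intro: sum_nonneg)
    moreover have "?edges + ?mean \<le> 0" using nonpos quadratic_shifted_laplacian[OF g] by simp
    ultimately have "?edges = 0 \<and> ?mean = 0" by linarith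
    then have edge_zero: "\<forall>e\<in>E. c e * (x \<bullet> (edge_matrix e *v x)) = 0"
      and sum_zero: "(\<Sum>i\<in>UNIV. x $ i) = 0"
      using terms_nonneg by (simp_all add: sum_nonneg_eq_0_iff)
    have adj_eq: "x $ u = x $ v" if "adj E u v" for u v
    proof -
      have uv: "{u, v} \<in> E" using that by (simp add: adj_def)
      with g have "u \<noteq> v" by (auto simp: graph_def)
      then show ?thesis
        using edge_zero[rule_format, OF uv] c_pos[OF uv] by (simp add: quadratic_edge_matrix)
    qed
    fix u :: 'v
    have const: "x $ v = x $ u" for v
    proof -
      have "(adj E)\<^sup>*\<^sup>* u v" using conn by (simp add: connected_graph_def)
      then show ?thesis by (induction rule: rtranclp_induct) (auto dest: adj_eq)
    qed
    have "(\<Sum>i\<in>UNIV. x $ i) = (\<Sum>i\<in>(UNIV :: 'v set). x $ u)" using const by (rule sum.cong[OF refl])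
    then have "x $ u = 0" using sum_zero by simp
    then have "x = 0" using const by (simp add: vec_eq_iff)
    then show False using \<open>x \<noteq> 0\<close> by simp
  qed
qed

lemma shifted_laplacian_increase_edge:
  assumes "graph E" "{a, b} \<in> E" "a \<noteq> b"
  shows "shifted_laplacian E (c({a, b} := c {a, b} + t))
    = shifted_laplacian E c + t *\<^sub>R outer_product (edge_vector a b)"
proof -
  have "(\<Sum>e\<in>E. (c({a, b} := c {a, b} + t)) e *\<^sub>R edge_matrix e)
      = (\<Sum>e\<in>E. c e *\<^sub>R edge_matrix e + (if e = {a, b} then t *\<^sub>R edge_matrix {a, b} else 0))"
    by (intro sum.cong) (auto simp: scaleR_add_left)
  also have "\<dots> = (\<Sum>e\<in>E. c e *\<^sub>R edge_matrix e) + t *\<^sub>R edge_matrix {a, b}"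
    using assms(2) by (simp add: sum.distrib sum.delta')
  finally show ?thesis
    using assms by (simp add: shifted_laplacian_def laplacian_eq_sum_edge_matrix edge_matrix_eq_outer_product add_ac)
qed

text \<open>Rayleigh monotonicity in determinant form: raising the conductance of one edge by t multiplies
  the determinant by 1 + t R, where R is the effective resistance between its endpoints, and R
  decreases when the other conductances increase.\<close>
lemma det_shifted_laplacian_increase_edge_ratio:
  fixes E :: "'v::finite set set"
  assumes conn: "connected_graph E" and c_pos: "\<And>e. e \<in> E \<Longrightarrow> 0 < c e"
    and c_le: "\<And>e. e \<in> E \<Longrightarrow> c e \<le> c' e" and "r \<in> E" and "0 \<le> t"
  shows "det (shifted_laplacian E (c'(r := c' r + t))) * det (shifted_laplacian E c)
    \<le> det (shifted_laplacian E (c(r := c r + t))) * det (shifted_laplacian E c')"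
proof -
  have g: "graph E" using conn by (simp add: connected_graph_def)
  obtain a b where ab: "r = {a, b}" "a \<noteq> b" using g \<open>r \<in> E\<close> by (rule graph_edgeE)
  let ?u = "edge_vector a b" and ?L = "shifted_laplacian E c" and ?L' = "shifted_laplacian E c'"
  have c'_pos: "0 < c' e" if "e \<in> E" for e using c_pos[OF that] c_le[OF that] by linarith
  have pd: "pos_def ?L" "pos_def ?L'"
    using c_pos c'_pos by (blast intro: pos_def_shifted_laplacian[OF conn])+
  obtain z where z: "?L *v z = ?u" using pd(1) by (rule pos_def_solvable)
  obtain z' where z': "?L' *v z' = ?u" using pd(2) by (rule pos_def_solvable)
  have resistance_le: "?u \<bullet> z' \<le> ?u \<bullet> z"
    using symmetric_shifted_laplacian pd(1) quadratic_shifted_laplacian_mono[OF g c_le] z z'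
    by (rule inner_solution_antimono)
  have increase: "det (shifted_laplacian E (d(r := d r + t))) = det (shifted_laplacian E d) * (1 + t * (?u \<bullet> y))"
    if "shifted_laplacian E d *v y = ?u" for d y
    using ab g \<open>r \<in> E\<close> that
    by (simp add: shifted_laplacian_increase_edge det_add_outer_edge_vector symmetric_shifted_laplacian)
  have "det (shifted_laplacian E (c'(r := c' r + t))) * det ?L = det ?L' * det ?L * (1 + t * (?u \<bullet> z'))"
    using increase[OF z'] by simp
  also have "\<dots> \<le> det ?L' * det ?L * (1 + t * (?u \<bullet> z))"
    using pd resistance_le \<open>0 \<le> t\<close> by (intro mult_left_mono add_left_mono) (auto simp: less_imp_le pos_def_det_pos)
  also have "\<dots> = det (shifted_laplacian E (c(r := c r + t))) * det ?L'"
    using increase[OF z] by simp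
  finally show ?thesis .
qed

lemma log_submodular_of_ratio_mono:
  fixes f :: "'a set \<Rightarrow> real"
  assumes pos: "\<And>X. 0 < f X"
    and ratio: "\<And>A A' r. A \<subseteq> A' \<Longrightarrow> r \<in> N \<Longrightarrow> r \<notin> A' \<Longrightarrow> f (insert r A') * f A \<le> f (insert r A) * f A'"
    and "finite T" "T \<subseteq> N"
  shows "f (S \<union> T) * f (S \<inter> T) \<le> f S * f T"
proof -
  have "f (S \<union> R) * f W \<le> f S * f (W \<union> R)" if "finite R" "R \<subseteq> N" "R \<inter> S = {}" "W \<subseteq> S" for R W
    using that
  proof (induction R rule: finite_induct)
    case empty
    then show ?case by (simp add: mult.commute)
  next
    case (insert r R)
    then have IH: "f (S \<union> R) * f W \<le> f S * f (W \<union> R)"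
      and step: "f (insert r (S \<union> R)) * f (W \<union> R) \<le> f (insert r (W \<union> R)) * f (S \<union> R)"
      by (auto intro!: ratio)
    have "f (insert r (S \<union> R)) * f W * (f (W \<union> R) * f (S \<union> R))
        = (f (insert r (S \<union> R)) * f (W \<union> R)) * (f (S \<union> R) * f W)" by (simp add: ac_simps)
    also have "\<dots> \<le> (f (insert r (W \<union> R)) * f (S \<union> R)) * (f S * f (W \<union> R))"
      by (rule mult_mono[OF step IH]) (use pos in \<open>auto intro: less_imp_le\<close>)
    also have "\<dots> = f S * f (insert r (W \<union> R)) * (f (W \<union> R) * f (S \<union> R))" by (simp add: ac_simps)
    finally show ?case using pos by (simp add: mult_le_cancel_right)
  qed
  moreover have "finite (T - S)" "T - S \<subseteq> N" "(T - S) \<inter> S = {}" "S \<inter> T \<subseteq> S"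
    using assms(3,4) by auto
  ultimately have "f (S \<union> (T - S)) * f (S \<inter> T) \<le> f S * f (S \<inter> T \<union> (T - S))" by blast
  moreover have "S \<union> (T - S) = S \<union> T" "S \<inter> T \<union> (T - S) = T" by auto
  ultimately show ?thesis by simp
qed

definition config_of :: "'a set \<Rightarrow> 'a \<Rightarrow> bool" where
  "config_of U = (\<lambda>e. e \<in> U)"

lemma inj_config_of: "inj config_of"
  by (auto simp: inj_def config_of_def fun_eq_iff)

lemma configs_eq_image_config_of: "configs E = config_of ` Pow E"
proof (intro equalityI subsetI)
  fix \<omega> assume "\<omega> \<in> configs E"
  then have "\<omega> = config_of {e \<in> E. \<omega> e}" by (auto simp: configs_def config_of_def fun_eq_iff)
  then show "\<omega> \<in> config_of ` Pow E" by blast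
qed (auto simp: configs_def config_of_def)

lemma sum_image_config_of: "(\<Sum>\<omega>\<in>config_of ` X. g \<omega>) = (\<Sum>U\<in>X. g (config_of U))"
  by (simp add: sum.reindex inj_on_subset[OF inj_config_of])

lemma kappa_config_of_insert:
  "r \<notin> U \<Longrightarrow> kappa q (config_of (insert r U))
    = (kappa q (config_of U))(r := kappa q (config_of U) r + (q - 1))"
  by (auto simp: fun_eq_iff kappa_def config_of_def)

lemma detH0_kappa_pos:
  assumes "connected_graph E" "0 < q"
  shows "0 < detH0 E (kappa q \<omega>)"
  using assms by (auto simp: detH0_eq_det_shifted_laplacian kappa_def
      intro!: pos_def_det_pos pos_def_shifted_laplacian)

lemma detH0_kappa_log_submodular:
  fixes E :: "'v::finite set set"
  assumes conn: "connected_graph E" and q: "1 \<le> q" and "T \<subseteq> E"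
  shows "detH0 E (kappa q (config_of (S \<union> T))) * detH0 E (kappa q (config_of (S \<inter> T)))
    \<le> detH0 E (kappa q (config_of S)) * detH0 E (kappa q (config_of T))"
proof (rule log_submodular_of_ratio_mono[where N = E])
  fix A A' r assume "A \<subseteq> A'" "r \<in> E" "r \<notin> A'"
  let ?c = "kappa q (config_of A)" and ?c' = "kappa q (config_of A')"
  have "det (shifted_laplacian E (?c'(r := ?c' r + (q - 1)))) * det (shifted_laplacian E ?c)
    \<le> det (shifted_laplacian E (?c(r := ?c r + (q - 1)))) * det (shifted_laplacian E ?c')"
    using \<open>A \<subseteq> A'\<close> \<open>r \<in> E\<close> q
    by (intro det_shifted_laplacian_increase_edge_ratio[OF conn]) (auto simp: kappa_def config_of_def)
  moreover have "r \<notin> A" using \<open>A \<subseteq> A'\<close> \<open>r \<notin> A'\<close> by blast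
  ultimately show "detH0 E (kappa q (config_of (insert r A'))) * detH0 E ?c
    \<le> detH0 E (kappa q (config_of (insert r A))) * detH0 E ?c'"
    using \<open>r \<notin> A'\<close> by (simp add: detH0_eq_det_shifted_laplacian kappa_config_of_insert)
qed (use assms in \<open>auto intro!: detH0_kappa_pos\<close>)

definition bernoulli_weight :: "'a set \<Rightarrow> real \<Rightarrow> 'a set \<Rightarrow> real" where
  "bernoulli_weight E p U = (\<Prod>e\<in>E. if e \<in> U then p else 1 - p)"

lemma bernoulli_weight_nonneg: "0 \<le> p \<Longrightarrow> p \<le> 1 \<Longrightarrow> 0 \<le> bernoulli_weight E p U"
  by (auto simp: bernoulli_weight_def intro: prod_nonneg)

lemma bernoulli_weight_holley:
  fixes p p' :: real
  assumes "0 \<le> p" "p \<le> p'" "p' \<le> 1"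
  shows "bernoulli_weight E p S * bernoulli_weight E p' T
    \<le> bernoulli_weight E p' (S \<union> T) * bernoulli_weight E p (S \<inter> T)"
  unfolding bernoulli_weight_def prod.distrib[symmetric]
proof (rule prod_mono)
  fix e
  have "p * (1 - p') \<le> p' * (1 - p)" using assms by (simp add: algebra_simps)
  then show "0 \<le> (if e \<in> S then p else 1 - p) * (if e \<in> T then p' else 1 - p') \<and>
    (if e \<in> S then p else 1 - p) * (if e \<in> T then p' else 1 - p')
      \<le> (if e \<in> S \<union> T then p' else 1 - p') * (if e \<in> S \<inter> T then p else 1 - p)"
    using assms by (auto simp: mult.commute)
qed

lemma weight_config_of:
  assumes "U \<subseteq> E"
  shows "weight E q p (config_of U) = bernoulli_weight E p U / sqrt (detH0 E (kappa q (config_of U)))"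
proof -
  have "{e \<in> E. config_of U e} = U" "{e \<in> E. \<not> config_of U e} = E - U"
    using assms by (auto simp: config_of_def)
  moreover have "bernoulli_weight E p U = p ^ card U * (1 - p) ^ card (E - U)"
    using assms by (simp add: bernoulli_weight_def prod.If_cases Int_absorb1 Diff_eq)
  ultimately show ?thesis by (simp add: weight_def)
qed

lemma weight_nonneg:
  assumes "connected_graph E" "1 \<le> q" "0 \<le> p" "p \<le> 1" "U \<subseteq> E"
  shows "0 \<le> weight E q p (config_of U)"
proof -
  have "0 \<le> bernoulli_weight E p U" using assms(3,4) by (rule bernoulli_weight_nonneg)
  moreover have "0 < detH0 E (kappa q (config_of U))" using detH0_kappa_pos[OF assms(1)] assms(2) by simp
  ultimately show ?thesis by (simp add: weight_config_of[OF assms(5)])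
qed

lemma weight_holley:
  fixes E :: "'v::finite set set"
  assumes conn: "connected_graph E" and q: "1 \<le> q" and p: "0 \<le> p" "p \<le> p'" "p' \<le> 1"
    and "S \<subseteq> E" "T \<subseteq> E"
  shows "weight E q p (config_of S) * weight E q p' (config_of T)
    \<le> weight E q p' (config_of (S \<union> T)) * weight E q p (config_of (S \<inter> T))"
proof -
  let ?D = "\<lambda>U. detH0 E (kappa q (config_of U))"
  have D_pos: "0 < ?D U" for U using detH0_kappa_pos[OF conn] q by simp
  then have D_nonneg: "0 \<le> ?D U" for U by (rule less_imp_le)
  have "1 / sqrt (?D S * ?D T) \<le> 1 / sqrt (?D (S \<union> T) * ?D (S \<inter> T))"
    using detH0_kappa_log_submodular[OF conn q \<open>T \<subseteq> E\<close>, of S] D_pos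
    by (intro divide_left_mono real_sqrt_le_mono mult_pos_pos real_sqrt_gt_zero) auto
  then have "bernoulli_weight E p S * bernoulli_weight E p' T * (1 / sqrt (?D S * ?D T))
      \<le> bernoulli_weight E p' (S \<union> T) * bernoulli_weight E p (S \<inter> T) * (1 / sqrt (?D (S \<union> T) * ?D (S \<inter> T)))"
    by (rule mult_mono[OF bernoulli_weight_holley[OF p]])
      (use p D_nonneg in \<open>auto intro!: mult_nonneg_nonneg bernoulli_weight_nonneg\<close>)
  then show ?thesis
    using assms by (simp add: weight_config_of Un_subset_iff le_infI1 real_sqrt_mult)
qed

lemma partition_function_pos:
  assumes conn: "connected_graph E" and q: "1 \<le> q" and p: "0 \<le> p" "p \<le> 1"
  shows "0 < (\<Sum>U\<in>Pow E. weight E q p (config_of U))"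
proof -
  define U where "U = (if p = 1 then E else {})"
  have "U \<subseteq> E" "0 < bernoulli_weight E p U"
    using p by (auto simp: U_def bernoulli_weight_def intro: prod_pos)
  then have "0 < weight E q p (config_of U)"
    using detH0_kappa_pos[OF conn] q by (simp add: weight_config_of)
  then show ?thesis
    using \<open>U \<subseteq> E\<close> weight_nonneg[OF conn q p] by (intro sum_pos2[of "Pow E" U]) auto
qed

theorem lemma4p7:
  fixes E :: "'v::finite set set" and q p p' :: real
  assumes "connected_graph E"
    and "q \<ge> 1" and "0 \<le> p" and "p \<le> p'" and "p' \<le> 1"
    and "increasing_event E A"
  shows "prob_event E q p A \<le> prob_event E q p' A"
proof -
  define \<A> where "\<A> = {U. config_of U \<in> A}"
  let ?w = "\<lambda>r U. weight E q r (config_of U)"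
  have "A \<inter> config_of ` Pow E = config_of ` (Pow E \<inter> \<A>)"
    using \<open>increasing_event E A\<close> by (auto simp: increasing_event_def configs_eq_image_config_of \<A>_def)
  then have prob_eq: "prob_event E q r A = (\<Sum>U\<in>Pow E \<inter> \<A>. ?w r U) / (\<Sum>U\<in>Pow E. ?w r U)" for r
    by (simp only: prob_event_def configs_eq_image_config_of sum_image_config_of)
  have "(\<Sum>U\<in>Pow E \<inter> \<A>. ?w p U) * (\<Sum>U\<in>Pow E. ?w p' U) \<le> (\<Sum>U\<in>Pow E \<inter> \<A>. ?w p' U) * (\<Sum>U\<in>Pow E. ?w p U)"
  proof (rule holley_inequality)
    fix S T assume "S \<in> \<A>" "S \<subseteq> T" "T \<subseteq> E"
    moreover from \<open>T \<subseteq> E\<close> have "config_of T \<in> configs E" by (simp add: configs_eq_image_config_of)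
    moreover from \<open>S \<subseteq> T\<close> have "config_of S \<le> config_of T" by (auto simp: config_of_def le_fun_def)
    ultimately show "T \<in> \<A>"
      using \<open>increasing_event E A\<close> by (auto simp: \<A>_def increasing_event_def)
  qed (use assms(1-5) in \<open>auto intro!: weight_nonneg weight_holley\<close>)
  moreover have "0 < (\<Sum>U\<in>Pow E. ?w p U)" "0 < (\<Sum>U\<in>Pow E. ?w p' U)"
    using assms by (auto intro: partition_function_pos)
  ultimately show ?thesis unfolding prob_eq by (simp add: field_simps)
qed

end
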